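(* Let $\mathbb{K}=\mathbb{R}$ or $\mathbb{C}$, $G=(g_1,\ldots,g_r)$ a random vector in $\mathbb{K}^r$ with $\mathbb{E}e^{\alpha\sum_{i}|g_i|^2}<\infty$ for some $\alpha>0$, and $(G(k)=(g_1(k),\ldots,g_r(k)))_{k\ge1}$ i.i.d. copies. Let $X_n$ be deterministic real diagonal with eigenvalues $\lambda_1^n\ge\cdots\ge\lambda_n^n$ such that $\frac1n\sum_i\delta_{\lambda_i^n}$ converges weakly to a compactly supported probability measure $\mu$ whose support has bounds $a\le b$, and $\lambda_1^n\to b$, $\lambda_n^n\to a$. Let $\mathcal K$ be a compact interval in $(b,\infty)$ and fix $\varepsilon\in(0,1)$ such that for all $n$ large enough, $z-\lambda_i^n>\varepsilon$ for all $z\in\mathcal K$ and $1\le i\le n$. For $L>0$ let $$\mathcal C_{\mathcal K,L}=\Big\{(K,C)\in\mathcal C(\mathcal K,\mathsf H_r)\times\mathsf H_r:\ \sup_{z\in\mathcal K}\|K(z)\|_2+\|C\|_2\le L,\ K\text{ is }\tfrac{L}{2\varepsilon}\text{-Lipschitz}\Big\}.$$ Then $$\limsup_{L\to\infty}\limsup_{n\to\infty}\frac1n\log\mathbb{P}\big(((K^n(z))_{z\in\mathcal K},C^n)\notin\mathcal C_{\mathcal K,L}\big)=-\infty.$$ In particular the law of $((K^n(z))_{z\in\mathcal K},C^n)$ is exponentially tight for the uniform topology on $\mathcal C(\mathcal K,\mathsf H_r)\times\mathsf H_r$.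
   Context: $\mathsf H_r$: $r\times r$ Hermitian (real symmetric if $\mathbb{K}=\mathbb{R}$) matrices; $\|M\|_2=\sqrt{\operatorname{Tr}(M^2)}$, and the Lipschitz property is with respect to $\|\cdot\|_2$. $K^n(z)_{ij}=\frac1n\sum_{k=1}^n\frac{\overline{g_i(k)}g_j(k)}{z-\lambda_k^n}$, $C^n_{ij}=\frac1n\sum_{k=1}^n\overline{g_i(k)}g_j(k)$. The uniform topology is given by $\sup_z\|K_1(z)-K_2(z)\|_2+\|C_1-C_2\|_2$. Exponential tightness: for every $M$ there is a compact set $\mathcal C$ with $\limsup_n\frac1n\log\mathbb{P}(\cdot\notin\mathcal C)\le -M$. *)

theory Defs
  imports "HOL-Probability.Probability"
begin

text \<open>Hermitian r x r complex matrices (real symmetric ones are the special case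
of real entries). The norm on complex^'r^'r is the Frobenius norm
sqrt (sum |M_ij|^2) = sqrt (Tr (M^2)) for Hermitian M.\<close>

definition hermitian :: "complex ^'r ^'r \<Rightarrow> bool" where
  "hermitian M \<longleftrightarrow> (\<forall>i j. M $ i $ j = cnj (M $ j $ i))"

definition measure_support :: "real measure \<Rightarrow> real set" where
  "measure_support \<mu> = {x. \<forall>e>0. emeasure \<mu> (ball x e) > 0}"

definition Kmat :: "(nat \<Rightarrow> 'a \<Rightarrow> complex ^'r) \<Rightarrow> (nat \<Rightarrow> nat \<Rightarrow> real) \<Rightarrow> nat \<Rightarrow> real \<Rightarrow> 'a \<Rightarrow> complex ^'r ^'r" where
  "Kmat G lam n z \<omega> = (\<chi> i j. (1 / of_nat n) *
      (\<Sum>k=1..n. cnj (G k \<omega> $ i) * (G k \<omega> $ j) / complex_of_real (z - lam n k)))"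

definition Cmat :: "(nat \<Rightarrow> 'a \<Rightarrow> complex ^'r) \<Rightarrow> nat \<Rightarrow> 'a \<Rightarrow> complex ^'r ^'r" where
  "Cmat G n \<omega> = (\<chi> i j. (1 / of_nat n) * (\<Sum>k=1..n. cnj (G k \<omega> $ i) * (G k \<omega> $ j)))"

text \<open>The space C([c,d], H_r) x H_r (functions are only looked at on [c,d]).\<close>
definition CH_space :: "real \<Rightarrow> real \<Rightarrow> ((real \<Rightarrow> complex ^'r ^'r) \<times> (complex ^'r ^'r)) set" where
  "CH_space c d = {(K, C). continuous_on {c..d} K \<and> (\<forall>z\<in>{c..d}. hermitian (K z)) \<and> hermitian C}"

definition CKL :: "real \<Rightarrow> real \<Rightarrow> real \<Rightarrow> real \<Rightarrow> ((real \<Rightarrow> complex ^'r ^'r) \<times> (complex ^'r ^'r)) set" where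
  "CKL c d eps L = {(K, C). (K, C) \<in> CH_space c d \<and>
      (SUP z\<in>{c..d}. norm (K z)) + norm C \<le> L \<and>
      (L / (2 * eps))-lipschitz_on {c..d} K}"

definition unif_dist :: "real \<Rightarrow> real \<Rightarrow> ((real \<Rightarrow> complex ^'r ^'r) \<times> (complex ^'r ^'r)) \<Rightarrow> ((real \<Rightarrow> complex ^'r ^'r) \<times> (complex ^'r ^'r)) \<Rightarrow> real" where
  "unif_dist c d p q = (SUP z\<in>{c..d}. norm (fst p z - fst q z)) + norm (snd p - snd q)"

definition unif_compact :: "real \<Rightarrow> real \<Rightarrow> ((real \<Rightarrow> complex ^'r ^'r) \<times> (complex ^'r ^'r)) set \<Rightarrow> bool" where
  "unif_compact c d S \<longleftrightarrow> S \<subseteq> CH_space c d \<and>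
     (\<forall>s. (\<forall>n. s n \<in> S) \<longrightarrow> (\<exists>l\<in>S. \<exists>\<phi>::nat\<Rightarrow>nat. strict_mono \<phi> \<and>
        (\<lambda>n. unif_dist c d (s (\<phi> n)) l) \<longlonglongrightarrow> 0))"

definition log_rate :: "nat \<Rightarrow> real \<Rightarrow> ereal" where
  "log_rate n p = (if p = 0 then -\<infinity> else ereal (ln p / real n))"

end

theory Submission
  imports Defs "HOL-Complex_Analysis.Great_Picard"
begin

text \<open>Writing g g* for the rank-one matrix of a vector g, both K^n(z) and C^n are
averages of g(k) g(k)* with weights bounded by 1/eps, and the weights of K^n(z) are
(1/eps^2)-Lipschitz in z on the interval. Hence whenever the empirical second moment
T = (1/n) sum_k |G(k)|^2 is at most eps L/2, the pair lies in C_{K,L}. By Cramer-Chernoff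
with the exponential moment, P(T > eps L/2) <= (E e^{alpha |G|^2})^n e^{-alpha eps L n/2},
so the exponential rate is at most ln E e^{alpha |G|^2} - alpha eps L/2, which tends to
-infinity as L grows. The sets C_{K,L} are compact for the uniform topology by
Arzela-Ascoli, since Lipschitz bounds, norm bounds and hermitianity pass to limits.\<close>

definition outer :: "complex ^'r \<Rightarrow> complex ^'r ^'r" where
  "outer g = (\<chi> i j. cnj (g $ i) * g $ j)"

lemma norm_outer: "norm (outer g) = (norm g)\<^sup>2"
proof -
  have row: "norm (outer g $ i) = norm g * cmod (g $ i)" for i
  proof -
    have "norm (outer g $ i) = L2_set (\<lambda>j. cmod (g $ i) * cmod (g $ j)) UNIV"
      by (simp add: outer_def norm_vec_def norm_mult)
    also have "\<dots> = cmod (g $ i) * norm g"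
      by (simp add: L2_set_right_distrib norm_vec_def)
    finally show ?thesis by simp
  qed
  have "norm (outer g) = L2_set (\<lambda>i. norm g * cmod (g $ i)) UNIV"
    unfolding norm_vec_def[of "outer g"] row ..
  also have "\<dots> = norm g * norm g"
    by (simp add: L2_set_right_distrib[symmetric] norm_vec_def)
  finally show ?thesis by (simp add: power2_eq_square)
qed

lemma hermitian_sum_outer: "hermitian (\<Sum>k\<in>A. w k *\<^sub>R outer (g k))"
  unfolding hermitian_def outer_def
  by (simp add: vector_scaleR_component) (simp add: scaleR_conv_of_real mult.commute)

lemma closed_hermitian: "closed (Collect hermitian)"
  unfolding hermitian_def
  by (intro closed_Collect_all closed_Collect_eq continuous_intros)

lemma Kmat_eq_sum_outer:
  "Kmat G lam n z \<omega> = (\<Sum>k=1..n. ((1 / real n) / (z - lam n k)) *\<^sub>R outer (G k \<omega>))"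
  unfolding Kmat_def outer_def
  by (simp add: vec_eq_iff vector_scaleR_component sum_distrib_left)
     (simp add: scaleR_conv_of_real field_simps)

lemma Cmat_eq_sum_outer: "Cmat G n \<omega> = (\<Sum>k=1..n. (1 / real n) *\<^sub>R outer (G k \<omega>))"
  unfolding Cmat_def outer_def
  by (simp add: vec_eq_iff vector_scaleR_component sum_distrib_left)
     (simp add: scaleR_conv_of_real field_simps)

definition mean_sqnorm :: "(nat \<Rightarrow> 'a \<Rightarrow> 'b::real_normed_vector) \<Rightarrow> nat \<Rightarrow> 'a \<Rightarrow> real" where
  "mean_sqnorm G n \<omega> = (\<Sum>k=1..n. (norm (G k \<omega>))\<^sup>2) / real n"

lemma mean_sqnorm_nonneg: "0 \<le> mean_sqnorm G n \<omega>"
  unfolding mean_sqnorm_def by (simp add: sum_nonneg)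

lemma norm_sum_outer_le_mean_sqnorm:
  assumes "\<And>k. k \<in> {1..n} \<Longrightarrow> \<bar>w k\<bar> \<le> B / real n"
  shows "norm (\<Sum>k=1..n. w k *\<^sub>R outer (G k \<omega>)) \<le> B * mean_sqnorm G n \<omega>"
proof -
  have "norm (\<Sum>k=1..n. w k *\<^sub>R outer (G k \<omega>)) \<le> (\<Sum>k=1..n. \<bar>w k\<bar> * (norm (G k \<omega>))\<^sup>2)"
    by (rule order_trans[OF norm_sum]) (simp add: norm_outer)
  also have "\<dots> \<le> (\<Sum>k=1..n. B / real n * (norm (G k \<omega>))\<^sup>2)"
    using assms by (intro sum_mono mult_right_mono) auto
  also have "\<dots> = B * mean_sqnorm G n \<omega>"
    by (simp add: mean_sqnorm_def sum_distrib_left sum_divide_distrib)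
  finally show ?thesis .
qed

lemma abs_inverse_diff_le:
  fixes z z' l eps :: real
  assumes "z - l > eps" "z' - l > eps" "eps > 0"
  shows "\<bar>1 / (z - l) - 1 / (z' - l)\<bar> \<le> \<bar>z - z'\<bar> / eps\<^sup>2"
proof -
  have pos: "z - l > 0" "z' - l > 0" using assms by auto
  have "1 / (z - l) - 1 / (z' - l) = (z' - z) / ((z - l) * (z' - l))"
    using pos by (simp add: field_simps)
  then have "\<bar>1 / (z - l) - 1 / (z' - l)\<bar> = \<bar>z - z'\<bar> / ((z - l) * (z' - l))"
    using pos by (simp add: abs_divide abs_minus_commute)
  also have "\<dots> \<le> \<bar>z - z'\<bar> / eps\<^sup>2"
    unfolding power2_eq_square using assms
    by (intro divide_left_mono mult_mono mult_pos_pos) auto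
  finally show ?thesis .
qed

lemma norm_Kmat_le:
  assumes "\<forall>i\<in>{1..n}. z - lam n i > eps" "eps > 0"
  shows "norm (Kmat G lam n z \<omega>) \<le> mean_sqnorm G n \<omega> / eps"
proof -
  have "\<bar>(1 / real n) / (z - lam n k)\<bar> \<le> (1 / eps) / real n" if "k \<in> {1..n}" for k
  proof -
    have "z - lam n k > eps" using assms that by auto
    then have "\<bar>(1 / real n) / (z - lam n k)\<bar> = (1 / (z - lam n k)) / real n"
      using assms by simp
    also have "\<dots> \<le> (1 / eps) / real n"
      using \<open>z - lam n k > eps\<close> assms by (intro divide_right_mono divide_left_mono) auto
    finally show ?thesis .
  qed
  then have "norm (Kmat G lam n z \<omega>) \<le> 1 / eps * mean_sqnorm G n \<omega>"
    unfolding Kmat_eq_sum_outer by (rule norm_sum_outer_le_mean_sqnorm)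
  then show ?thesis by simp
qed

lemma norm_Cmat_le: "norm (Cmat G n \<omega>) \<le> mean_sqnorm G n \<omega>"
  using norm_sum_outer_le_mean_sqnorm[of n "\<lambda>_. 1 / real n" 1]
  unfolding Cmat_eq_sum_outer by simp

lemma Kmat_lipschitz:
  assumes gap: "\<forall>z\<in>{c..d}. \<forall>i\<in>{1..n}. z - lam n i > eps" and eps: "eps > 0"
  shows "(mean_sqnorm G n \<omega> / eps\<^sup>2)-lipschitz_on {c..d} (\<lambda>z. Kmat G lam n z \<omega>)"
proof (rule lipschitz_onI)
  fix z z' assume z: "z \<in> {c..d}" and z': "z' \<in> {c..d}"
  have "\<bar>(1 / real n) / (z - lam n k) - (1 / real n) / (z' - lam n k)\<bar> \<le> (\<bar>z - z'\<bar> / eps\<^sup>2) / real n"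
    if "k \<in> {1..n}" for k
  proof -
    have "\<bar>(1 / real n) / (z - lam n k) - (1 / real n) / (z' - lam n k)\<bar>
        = \<bar>1 / (z - lam n k) - 1 / (z' - lam n k)\<bar> / real n"
    proof -
      have "(1 / real n) / (z - lam n k) - (1 / real n) / (z' - lam n k)
          = (1 / (z - lam n k) - 1 / (z' - lam n k)) / real n"
        by (simp add: diff_divide_distrib mult.commute)
      then show ?thesis by (simp add: abs_divide)
    qed
    also have "\<dots> \<le> (\<bar>z - z'\<bar> / eps\<^sup>2) / real n"
      using gap z z' that eps by (intro divide_right_mono abs_inverse_diff_le) auto
    finally show ?thesis .
  qed
  then have "norm (\<Sum>k=1..n. ((1 / real n) / (z - lam n k) - (1 / real n) / (z' - lam n k)) *\<^sub>R outer (G k \<omega>))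
      \<le> \<bar>z - z'\<bar> / eps\<^sup>2 * mean_sqnorm G n \<omega>"
    by (rule norm_sum_outer_le_mean_sqnorm)
  then show "dist (Kmat G lam n z \<omega>) (Kmat G lam n z' \<omega>) \<le> mean_sqnorm G n \<omega> / eps\<^sup>2 * dist z z'"
    by (simp only: dist_norm Kmat_eq_sum_outer scaleR_diff_left sum_subtractf dist_real_def)
       (simp add: mult.commute)
qed (simp add: mean_sqnorm_nonneg)

text \<open>The factor eps < 1 is what lets the bound on C fit next to the bound on K.\<close>
lemma Kmat_Cmat_in_CKL:
  assumes gap: "\<forall>z\<in>{c..d}. \<forall>i\<in>{1..n}. z - lam n i > eps"
    and eps: "0 < eps" "eps < 1" and cd: "c \<le> d"
    and small: "mean_sqnorm G n \<omega> \<le> eps * L / 2"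
  shows "((\<lambda>z. Kmat G lam n z \<omega>), Cmat G n \<omega>) \<in> CKL c d eps L"
proof -
  let ?T = "mean_sqnorm G n \<omega>"
  have "0 \<le> eps * L"
    using mean_sqnorm_nonneg[of G n \<omega>] small by linarith
  then have L: "0 \<le> L"
    using eps by (simp add: zero_le_mult_iff)
  have "(SUP z\<in>{c..d}. norm (Kmat G lam n z \<omega>)) \<le> ?T / eps"
    using cd gap eps by (intro cSUP_least norm_Kmat_le) auto
  moreover have "?T / eps \<le> L / 2"
  proof -
    have "?T / eps \<le> (eps * L / 2) / eps" using small eps by (intro divide_right_mono) auto
    then show ?thesis using eps by simp
  qed
  moreover have "?T \<le> L / 2"
    using small mult_left_le_one_le[OF L] eps by (smt (verit) field_sum_of_halves)
  ultimately have bound: "(SUP z\<in>{c..d}. norm (Kmat G lam n z \<omega>)) + norm (Cmat G n \<omega>) \<le> L"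
    using norm_Cmat_le[of G n \<omega>] by linarith
  have "?T / eps\<^sup>2 \<le> (eps * L / 2) / eps\<^sup>2" using small by (intro divide_right_mono) auto
  also have "\<dots> = L / (2 * eps)" using eps by (simp add: power2_eq_square)
  finally have "?T / eps\<^sup>2 \<le> L / (2 * eps)" .
  then have lip: "(L / (2 * eps))-lipschitz_on {c..d} (\<lambda>z. Kmat G lam n z \<omega>)"
    using Kmat_lipschitz[where G=G and \<omega>=\<omega> and lam=lam, OF gap eps(1)]
    by (rule lipschitz_on_le[rotated])
  show ?thesis
    unfolding CKL_def CH_space_def Kmat_eq_sum_outer Cmat_eq_sum_outer
    using lipschitz_on_continuous_on[OF lip] bound lip
    by (simp add: hermitian_sum_outer Kmat_eq_sum_outer Cmat_eq_sum_outer)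
qed

lemma chernoff_iid_sum:
  fixes X :: "nat \<Rightarrow> 'a \<Rightarrow> 'b::topological_space" and h :: "'b \<Rightarrow> real"
  assumes "prob_space M" and meas: "\<And>k. X k \<in> borel_measurable M"
    and indep: "prob_space.indep_vars M (\<lambda>_. borel) X {1..}"
    and ident: "\<And>k. k \<ge> 1 \<Longrightarrow> distr M borel (X k) = distr M borel (X 1)"
    and h: "h \<in> borel_measurable borel"
    and \<alpha>: "\<alpha> > 0" and int1: "integrable M (\<lambda>\<omega>. exp (\<alpha> * h (X 1 \<omega>)))"
  shows "measure M {\<omega>\<in>space M. t \<le> (\<Sum>k=1..n. h (X k \<omega>))}
         \<le> (\<integral>\<omega>. exp (\<alpha> * h (X 1 \<omega>)) \<partial>M) ^ n / exp (\<alpha> * t)"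
proof -
  interpret prob_space M by fact
  define f where "f x = exp (\<alpha> * h x)" for x
  have [measurable]: "f \<in> borel_measurable borel" unfolding f_def using h by measurable
  note meas[measurable]
  have intk: "integrable M (\<lambda>\<omega>. f (X k \<omega>))" if "k \<ge> 1" for k
  proof -
    have "integrable (distr M borel (X 1)) f"
      using int1 by (subst integrable_distr_eq) (auto simp: f_def)
    then have "integrable (distr M borel (X k)) f" using ident[OF that] by simp
    then show ?thesis by (subst (asm) integrable_distr_eq) auto
  qed
  have intk_eq: "(\<integral>\<omega>. f (X k \<omega>) \<partial>M) = (\<integral>\<omega>. f (X 1 \<omega>) \<partial>M)" if "k \<ge> 1" for k
  proof -
    have "(\<integral>\<omega>. f (X k \<omega>) \<partial>M) = integral\<^sup>L (distr M borel (X k)) f"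
      by (subst integral_distr) auto
    also have "\<dots> = integral\<^sup>L (distr M borel (X 1)) f" using ident[OF that] by simp
    also have "\<dots> = (\<integral>\<omega>. f (X 1 \<omega>) \<partial>M)" by (subst integral_distr) auto
    finally show ?thesis .
  qed
  have ind: "indep_vars (\<lambda>_. borel) (\<lambda>k \<omega>. f (X k \<omega>)) {1..n}"
  proof -
    have "indep_vars (\<lambda>_. borel) X {1..n}"
      using indep by (rule indep_vars_subset) auto
    then show ?thesis by (rule indep_vars_compose2) simp
  qed
  define u where "u \<omega> = (\<Prod>k\<in>{1..n}. f (X k \<omega>))" for \<omega>
  have u_eq: "u \<omega> = exp (\<alpha> * (\<Sum>k=1..n. h (X k \<omega>)))" for \<omega>
    unfolding u_def f_def by (simp add: exp_sum sum_distrib_left)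
  have u_int: "integrable M u"
    unfolding u_def by (rule indep_vars_integrable) (use ind intk in auto)
  have u_integral: "(\<integral>\<omega>. u \<omega> \<partial>M) = (\<integral>\<omega>. f (X 1 \<omega>) \<partial>M) ^ n"
  proof -
    have "(\<integral>\<omega>. u \<omega> \<partial>M) = (\<Prod>k\<in>{1..n}. \<integral>\<omega>. f (X k \<omega>) \<partial>M)"
      unfolding u_def by (rule indep_vars_lebesgue_integral) (use ind intk in auto)
    also have "\<dots> = (\<Prod>k\<in>{1..n}. \<integral>\<omega>. f (X 1 \<omega>) \<partial>M)"
      by (intro prod.cong refl intk_eq) simp
    finally show ?thesis by simp
  qed
  have "{\<omega>\<in>space M. t \<le> (\<Sum>k=1..n. h (X k \<omega>))} = {\<omega>\<in>space M. exp (\<alpha> * t) \<le> u \<omega>}"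
    using \<alpha> by (simp add: u_eq)
  also have "measure M \<dots> \<le> (\<integral>\<omega>. u \<omega> \<partial>M) / exp (\<alpha> * t)"
    by (rule integral_Markov_inequality_measure[OF u_int, of "space M"]) (auto simp: u_eq)
  finally show ?thesis unfolding u_integral f_def .
qed

lemma bdd_above_norm_image:
  fixes K :: "'a::topological_space \<Rightarrow> 'b::real_normed_vector"
  assumes "compact S" "continuous_on S K"
  shows "bdd_above ((\<lambda>z. norm (K z)) ` S)"
proof -
  have "continuous_on S (\<lambda>z. norm (K z))" using assms(2) by (rule continuous_on_norm)
  then have "compact ((\<lambda>z. norm (K z)) ` S)" using assms(1) by (rule compact_continuous_image)
  then show ?thesis by (intro bounded_imp_bdd_above compact_imp_bounded)
qed

lemma CKL_norm_le:
  assumes "(K, C) \<in> CKL c d eps L" "z \<in> {c..d}"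
  shows "norm (K z) + norm C \<le> L"
proof -
  have "continuous_on {c..d} K" and bound: "(SUP z\<in>{c..d}. norm (K z)) + norm C \<le> L"
    using assms(1) unfolding CKL_def CH_space_def by auto
  then have "norm (K z) \<le> (SUP z\<in>{c..d}. norm (K z))"
    using assms(2) by (intro cSUP_upper bdd_above_norm_image) auto
  then show ?thesis using bound by linarith
qed

lemma lipschitz_on_pointwise_limit:
  assumes lip: "\<And>n. B-lipschitz_on S (f n)" and lim: "\<And>x. x \<in> S \<Longrightarrow> (\<lambda>n. f n x) \<longlonglongrightarrow> g x"
  shows "B-lipschitz_on S g"
proof (rule lipschitz_onI)
  fix x y assume xy: "x \<in> S" "y \<in> S"
  show "dist (g x) (g y) \<le> B * dist x y"
  proof (rule LIMSEQ_le_const2)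
    show "(\<lambda>n. dist (f n x) (f n y)) \<longlonglongrightarrow> dist (g x) (g y)"
      using xy by (intro tendsto_dist lim)
    show "\<exists>N. \<forall>n\<ge>N. dist (f n x) (f n y) \<le> B * dist x y"
      using lipschitz_onD[OF lip xy] by blast
  qed
qed (rule lipschitz_on_nonneg[OF lip])

lemma CKL_closed_pointwise:
  assumes cd: "c \<le> d" and in_CKL: "\<And>n. (K n, C n) \<in> CKL c d eps L"
    and K_lim: "\<And>z. z \<in> {c..d} \<Longrightarrow> (\<lambda>n. K n z) \<longlonglongrightarrow> g z" and C_lim: "C \<longlonglongrightarrow> C0"
  shows "(g, C0) \<in> CKL c d eps L"
proof -
  have lip: "(L / (2 * eps))-lipschitz_on {c..d} g"
  proof (rule lipschitz_on_pointwise_limit[where f = K])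
    show "(L / (2 * eps))-lipschitz_on {c..d} (K n)" for n
      using in_CKL[of n] unfolding CKL_def by auto
  qed (rule K_lim)
  have herm: "hermitian (g z)" if z: "z \<in> {c..d}" for z
  proof -
    have "\<And>n. K n z \<in> Collect hermitian"
      using in_CKL z unfolding CKL_def CH_space_def by auto
    from closed_sequentially[OF closed_hermitian this K_lim[OF z]] show ?thesis by simp
  qed
  have "hermitian C0"
  proof -
    have "\<And>n. C n \<in> Collect hermitian"
      using in_CKL unfolding CKL_def CH_space_def by auto
    from closed_sequentially[OF closed_hermitian this C_lim] show ?thesis by simp
  qed
  moreover have "norm (g z) \<le> L - norm C0" if z: "z \<in> {c..d}" for z
  proof -
    have "norm (g z) + norm C0 \<le> L"
    proof (rule LIMSEQ_le_const2)
      show "(\<lambda>n. norm (K n z) + norm (C n)) \<longlonglongrightarrow> norm (g z) + norm C0"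
        using z by (intro tendsto_add tendsto_norm K_lim C_lim)
      show "\<exists>N. \<forall>n\<ge>N. norm (K n z) + norm (C n) \<le> L"
        using CKL_norm_le[OF in_CKL z] by blast
    qed
    then show ?thesis by simp
  qed
  then have "(SUP z\<in>{c..d}. norm (g z)) \<le> L - norm C0"
    using cd by (intro cSUP_least) auto
  then have "(SUP z\<in>{c..d}. norm (g z)) + norm C0 \<le> L" by simp
  ultimately show ?thesis
    unfolding CKL_def CH_space_def using lipschitz_on_continuous_on[OF lip] lip herm by auto
qed

lemma unif_dist_tendsto_zero:
  assumes cd: "c \<le> d" and K_lim: "uniform_limit {c..d} K g sequentially" and C_lim: "C \<longlonglongrightarrow> C0"
  shows "(\<lambda>n. unif_dist c d (K n, C n) (g, C0)) \<longlonglongrightarrow> 0"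
proof -
  have "(\<lambda>n. SUP z\<in>{c..d}. norm (K n z - g z)) \<longlonglongrightarrow> 0"
  proof (rule LIMSEQ_I)
    fix e :: real assume "0 < e"
    then obtain N where N: "\<And>n z. n \<ge> N \<Longrightarrow> z \<in> {c..d} \<Longrightarrow> norm (K n z - g z) < e / 2"
      using K_lim unfolding uniform_limit_sequentially_iff dist_norm
      by (metis half_gt_zero)
    have "norm (SUP z\<in>{c..d}. norm (K n z - g z)) < e" if "n \<ge> N" for n
    proof -
      have bdd: "bdd_above ((\<lambda>z. norm (K n z - g z)) ` {c..d})"
        using N[OF that] by (intro bdd_aboveI2) (rule less_imp_le)
      have "0 \<le> norm (K n c - g c)" by simp
      also have "\<dots> \<le> (SUP z\<in>{c..d}. norm (K n z - g z))"
        using cd by (intro cSUP_upper bdd) auto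
      finally have "0 \<le> (SUP z\<in>{c..d}. norm (K n z - g z))" .
      moreover have "(SUP z\<in>{c..d}. norm (K n z - g z)) \<le> e / 2"
        using cd N[OF that] by (intro cSUP_least) (auto intro: less_imp_le)
      ultimately show ?thesis using \<open>0 < e\<close> by simp
    qed
    then show "\<exists>N. \<forall>n\<ge>N. norm ((SUP z\<in>{c..d}. norm (K n z - g z)) - 0) < e" by auto
  qed
  moreover have "(\<lambda>n. norm (C n - C0)) \<longlonglongrightarrow> 0"
    using C_lim by (intro tendsto_norm_zero LIM_zero)
  ultimately show ?thesis
    unfolding unif_dist_def using tendsto_add[of _ 0 sequentially _ 0] by simp
qed

lemma CKL_compact:
  assumes eps: "0 < eps" and cd: "c \<le> d" and L: "0 \<le> L"
  shows "unif_compact c d (CKL c d eps L :: ((real \<Rightarrow> complex^'r^'r) \<times> (complex^'r^'r)) set)"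
  unfolding unif_compact_def
proof (intro conjI allI impI)
  show "CKL c d eps L \<subseteq> CH_space c d" unfolding CKL_def by auto
  fix s :: "nat \<Rightarrow> (real \<Rightarrow> complex^'r^'r) \<times> (complex^'r^'r)"
  assume s_in: "\<forall>n. s n \<in> CKL c d eps L"
  define K where "K n = fst (s n)" for n
  define C where "C n = snd (s n)" for n
  define B where "B = L / (2 * eps)"
  have in_CKL: "(K n, C n) \<in> CKL c d eps L" for n
    using s_in unfolding K_def C_def by simp
  have K_lip: "B-lipschitz_on {c..d} (K n)" for n
    using in_CKL unfolding CKL_def B_def by auto
  have K_bound: "norm (K n z) \<le> L" if "z \<in> {c..d}" for n z
    using CKL_norm_le[OF in_CKL that, of n] norm_ge_zero[of "C n"] by linarith
  have C_bound: "norm (C n) \<le> L" for n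
  proof -
    have "norm (K n c) + norm (C n) \<le> L" using CKL_norm_le[OF in_CKL] cd by simp
    then show ?thesis using norm_ge_zero[of "K n c"] by linarith
  qed
  have B: "0 \<le> B" unfolding B_def using eps L by simp
  have equicont: "\<exists>\<delta>>0. \<forall>n y. y \<in> {c..d} \<and> norm (x - y) < \<delta> \<longrightarrow> norm (K n x - K n y) < e"
    if x: "x \<in> {c..d}" and e: "0 < e" for x e
  proof (intro exI[of _ "e / (B + 1)"] conjI allI impI)
    show "0 < e / (B + 1)" using e B by simp
    fix n y assume y: "y \<in> {c..d} \<and> norm (x - y) < e / (B + 1)"
    have "norm (K n x - K n y) \<le> B * norm (x - y)"
      using lipschitz_on_normD[OF K_lip x] y by blast
    also have "\<dots> \<le> B * (e / (B + 1))" using y B by (intro mult_left_mono) auto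
    also have "\<dots> < e" using e B by (simp add: field_simps)
    finally show "norm (K n x - K n y) < e" .
  qed
  obtain g k1 where "continuous_on {c..d} g" and k1: "strict_mono (k1 :: nat \<Rightarrow> nat)"
    and unif: "\<And>e. 0 < e \<Longrightarrow> \<exists>N. \<forall>n x. n \<ge> N \<and> x \<in> {c..d} \<longrightarrow> norm (K (k1 n) x - g x) < e"
    using Arzela_Ascoli[OF compact_Icc K_bound equicont] by blast
  obtain C0 k2 where k2: "strict_mono (k2 :: nat \<Rightarrow> nat)" and C_lim: "((\<lambda>n. C (k1 n)) \<circ> k2) \<longlonglongrightarrow> C0"
    using compact_imp_seq_compact[OF compact_cball, of 0 L]
    by (rule seq_compactE) (use C_bound in auto)
  define \<phi> where "\<phi> = k1 \<circ> k2"
  have "uniform_limit {c..d} (\<lambda>n. K (k1 n)) g sequentially"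
    unfolding uniform_limit_sequentially_iff dist_norm
  proof (intro allI impI)
    fix e :: real assume "0 < e"
    then obtain N where "\<forall>n x. n \<ge> N \<and> x \<in> {c..d} \<longrightarrow> norm (K (k1 n) x - g x) < e"
      using unif by blast
    then show "\<exists>N. \<forall>n\<ge>N. \<forall>x\<in>{c..d}. norm (K (k1 n) x - g x) < e" by blast
  qed
  from filterlim_compose[OF this filterlim_subseq[OF k2]]
  have K_unif: "uniform_limit {c..d} (\<lambda>n. K (\<phi> n)) g sequentially"
    by (simp add: \<phi>_def comp_def)
  have C_lim': "(\<lambda>n. C (\<phi> n)) \<longlonglongrightarrow> C0"
    using C_lim by (simp add: \<phi>_def comp_def)
  have "(g, C0) \<in> CKL c d eps L"
    using cd in_CKL tendsto_uniform_limitI[OF K_unif] C_lim'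
    by (rule CKL_closed_pointwise[where K = "\<lambda>n. K (\<phi> n)" and C = "\<lambda>n. C (\<phi> n)"])
  moreover have "(\<lambda>n. unif_dist c d (s (\<phi> n)) (g, C0)) \<longlonglongrightarrow> 0"
    using unif_dist_tendsto_zero[OF cd K_unif C_lim'] by (simp add: K_def C_def)
  moreover have "strict_mono \<phi>" unfolding \<phi>_def using k1 k2 by (rule strict_mono_o)
  ultimately show "\<exists>l\<in>CKL c d eps L. \<exists>\<phi>::nat\<Rightarrow>nat. strict_mono \<phi> \<and> (\<lambda>n. unif_dist c d (s (\<phi> n)) l) \<longlonglongrightarrow> 0"
    by blast
qed

lemma measure_mono_measurable_superset:
  assumes "finite_measure M" "B \<in> sets M" "A \<subseteq> B"
  shows "measure M A \<le> measure M B"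
proof (cases "A \<in> sets M")
  case True
  then show ?thesis using assms by (intro finite_measure.finite_measure_mono) auto
next
  case False
  then show ?thesis by (simp add: measure_notin_sets)
qed

lemma log_rate_le:
  assumes "0 \<le> p" "p \<le> A ^ n / exp (\<beta> * real n)" "A > 0" "n > 0"
  shows "log_rate n p \<le> ereal (ln A - \<beta>)"
proof (cases "p = 0")
  case True
  then show ?thesis by (simp add: log_rate_def)
next
  case False
  then have p: "p > 0" using assms by simp
  have "ln p \<le> ln (A ^ n / exp (\<beta> * real n))"
    using p assms by (subst ln_le_cancel_iff) auto
  also have "\<dots> = real n * ln A - \<beta> * real n"
    using assms by (simp add: ln_div ln_realpow)
  finally have "ln p / real n \<le> ln A - \<beta>"
    using assms by (simp add: field_simps)
  then show ?thesis using False by (simp add: log_rate_def)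
qed

lemma limsup_log_rate_le:
  assumes "\<forall>\<^sub>F n in sequentially. 0 \<le> p n \<and> p n \<le> A ^ n / exp (\<beta> * real n)" and "A > 0"
  shows "limsup (\<lambda>n. log_rate n (p n)) \<le> ereal (ln A - \<beta>)"
proof (rule Limsup_bounded)
  show "\<forall>\<^sub>F n in sequentially. log_rate n (p n) \<le> ereal (ln A - \<beta>)"
    using assms(1) eventually_gt_at_top[of 0]
    by eventually_elim (use assms(2) in \<open>auto intro: log_rate_le\<close>)
qed

lemma Limsup_at_top_linear_decay:
  fixes f :: "real \<Rightarrow> ereal"
  assumes decay: "\<And>L. f L \<le> ereal (A - \<beta> * L)" and "\<beta> > 0"
  shows "Limsup at_top f = -\<infinity>"
proof (rule ereal_bot)
  fix B :: real
  show "Limsup at_top f \<le> ereal B"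
  proof (rule Limsup_bounded)
    show "\<forall>\<^sub>F L in at_top. f L \<le> ereal B"
      using eventually_ge_at_top[of "(A - B) / \<beta>"]
    proof eventually_elim
      case (elim L)
      then have "A - \<beta> * L \<le> B" using \<open>\<beta> > 0\<close> by (simp add: pos_divide_le_eq algebra_simps)
      then show ?case using decay[of L] by (simp add: order_trans)
    qed
  qed
qed

lemma prob_not_in_CKL_le:
  fixes G :: "nat \<Rightarrow> 'a \<Rightarrow> complex ^'r"
  assumes "prob_space M" and meas: "\<And>k. G k \<in> borel_measurable M"
    and gap: "\<forall>z\<in>{c..d}. \<forall>i\<in>{1..n}. z - lam n i > eps"
    and eps: "0 < eps" "eps < 1" and cd: "c \<le> d" and n: "n > 0"
  shows "measure M {\<omega> \<in> space M. ((\<lambda>z. Kmat G lam n z \<omega>), Cmat G n \<omega>) \<notin> CKL c d eps L}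
    \<le> measure M {\<omega> \<in> space M. eps * L / 2 * real n \<le> (\<Sum>k=1..n. (norm (G k \<omega>))\<^sup>2)}"
proof (rule measure_mono_measurable_superset)
  show "finite_measure M" using \<open>prob_space M\<close> by (rule prob_space.finite_measure)
  show "{\<omega> \<in> space M. eps * L / 2 * real n \<le> (\<Sum>k=1..n. (norm (G k \<omega>))\<^sup>2)} \<in> sets M"
    using meas by measurable
  have "eps * L / 2 * real n \<le> (\<Sum>k=1..n. (norm (G k \<omega>))\<^sup>2)"
    if "((\<lambda>z. Kmat G lam n z \<omega>), Cmat G n \<omega>) \<notin> CKL c d eps L" for \<omega>
  proof -
    have "eps * L / 2 < mean_sqnorm G n \<omega>"
      using that Kmat_Cmat_in_CKL[where lam = lam and G = G, OF gap eps cd] by (meson not_less)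
    then show ?thesis using n by (simp add: mean_sqnorm_def field_simps)
  qed
  then show "{\<omega> \<in> space M. ((\<lambda>z. Kmat G lam n z \<omega>), Cmat G n \<omega>) \<notin> CKL c d eps L}
    \<subseteq> {\<omega> \<in> space M. eps * L / 2 * real n \<le> (\<Sum>k=1..n. (norm (G k \<omega>))\<^sup>2)}"
    by blast
qed

lemma limsup_log_rate_not_in_CKL_le:
  fixes G :: "nat \<Rightarrow> 'a \<Rightarrow> complex ^'r"
  assumes "prob_space M" and meas: "\<And>k. G k \<in> borel_measurable M"
    and indep: "prob_space.indep_vars M (\<lambda>_. borel) G {1..}"
    and ident: "\<And>k. k \<ge> 1 \<Longrightarrow> distr M borel (G k) = distr M borel (G 1)"
    and \<alpha>: "\<alpha> > 0" and int1: "integrable M (\<lambda>\<omega>. exp (\<alpha> * (norm (G 1 \<omega>))\<^sup>2))"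
    and eps: "0 < eps" "eps < 1" and cd: "c \<le> d"
    and gap: "\<forall>\<^sub>F n in sequentially. \<forall>z\<in>{c..d}. \<forall>i\<in>{1..n}. z - lam n i > eps"
  shows "limsup (\<lambda>n. log_rate n
      (measure M {\<omega> \<in> space M. ((\<lambda>z. Kmat G lam n z \<omega>), Cmat G n \<omega>) \<notin> CKL c d eps L}))
    \<le> ereal (ln (\<integral>\<omega>. exp (\<alpha> * (norm (G 1 \<omega>))\<^sup>2) \<partial>M) - \<alpha> * eps / 2 * L)"
proof (rule limsup_log_rate_le)
  interpret prob_space M by fact
  let ?A = "\<integral>\<omega>. exp (\<alpha> * (norm (G 1 \<omega>))\<^sup>2) \<partial>M"
  show "?A > 0"
    using integral_ge_const[OF int1, of 1] \<alpha> by (simp add: AE_I2)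
  show "\<forall>\<^sub>F n in sequentially.
      0 \<le> measure M {\<omega> \<in> space M. ((\<lambda>z. Kmat G lam n z \<omega>), Cmat G n \<omega>) \<notin> CKL c d eps L}
    \<and> measure M {\<omega> \<in> space M. ((\<lambda>z. Kmat G lam n z \<omega>), Cmat G n \<omega>) \<notin> CKL c d eps L}
        \<le> ?A ^ n / exp (\<alpha> * eps / 2 * L * real n)"
    using gap eventually_gt_at_top[of 0]
  proof eventually_elim
    case (elim n)
    have "measure M {\<omega> \<in> space M. ((\<lambda>z. Kmat G lam n z \<omega>), Cmat G n \<omega>) \<notin> CKL c d eps L}
        \<le> measure M {\<omega> \<in> space M. eps * L / 2 * real n \<le> (\<Sum>k=1..n. (norm (G k \<omega>))\<^sup>2)}"
      using elim eps cd by (intro prob_not_in_CKL_le[OF \<open>prob_space M\<close> meas]) auto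
    also have "\<dots> \<le> ?A ^ n / exp (\<alpha> * (eps * L / 2 * real n))"
      using \<open>prob_space M\<close> meas indep ident _ \<alpha> int1 by (rule chernoff_iid_sum) measurable
    finally show ?case by (simp add: mult_ac)
  qed
qed

theorem lemma5p2:
  fixes M :: "'a measure"
    and G :: "nat \<Rightarrow> 'a \<Rightarrow> complex ^'r"
    and lam :: "nat \<Rightarrow> nat \<Rightarrow> real"
    and \<mu> :: "real measure"
    and a b c d eps :: real
  assumes "prob_space M"
    and meas: "\<And>k. G k \<in> borel_measurable M"
    and indep: "prob_space.indep_vars M (\<lambda>_. borel) G {1..}"
    and ident: "\<And>k. k \<ge> 1 \<Longrightarrow> distr M borel (G k) = distr M borel (G 1)"
    and expmom: "\<exists>\<alpha>>0. integrable M (\<lambda>\<omega>. exp (\<alpha> * (\<Sum>i\<in>UNIV. (cmod (G 1 \<omega> $ i))\<^sup>2)))"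
    and decr: "\<And>n i. 1 \<le> i \<Longrightarrow> i < n \<Longrightarrow> lam n i \<ge> lam n (Suc i)"
    and mu_prob: "prob_space \<mu>" and mu_sets: "sets \<mu> = sets borel"
    and weak: "\<And>f::real \<Rightarrow> real. continuous_on UNIV f \<Longrightarrow> bounded (range f) \<Longrightarrow>
         (\<lambda>n. (1 / real n) * (\<Sum>i=1..n. f (lam n i))) \<longlonglongrightarrow> integral\<^sup>L \<mu> f"
    and supp_compact: "compact (measure_support \<mu>)"
    and a_def: "a = Inf (measure_support \<mu>)" and b_def: "b = Sup (measure_support \<mu>)"
    and top: "(\<lambda>n. lam n 1) \<longlonglongrightarrow> b"
    and bot: "(\<lambda>n. lam n n) \<longlonglongrightarrow> a"
    and cd: "b < c" "c \<le> d"
    and eps: "0 < eps" "eps < 1"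
    and gap: "\<forall>\<^sub>F n in sequentially. \<forall>z\<in>{c..d}. \<forall>i\<in>{1..n}. z - lam n i > eps"
  shows "Limsup at_top (\<lambda>L::real. limsup (\<lambda>n. log_rate n
            (measure M {\<omega> \<in> space M. ((\<lambda>z. Kmat G lam n z \<omega>), Cmat G n \<omega>) \<notin> CKL c d eps L})))
           = -\<infinity>
     \<and> (\<forall>B::real. \<exists>S. unif_compact c d S \<and>
          limsup (\<lambda>n. log_rate n
            (measure M {\<omega> \<in> space M. ((\<lambda>z. Kmat G lam n z \<omega>), Cmat G n \<omega>) \<notin> S})) \<le> ereal (- B))"
proof -
  obtain \<alpha> where \<alpha>: "\<alpha> > 0" and int1: "integrable M (\<lambda>\<omega>. exp (\<alpha> * (norm (G 1 \<omega>))\<^sup>2))"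
    using expmom by (auto simp: norm_vec_def L2_set_def sum_nonneg)
  define A where "A = ln (\<integral>\<omega>. exp (\<alpha> * (norm (G 1 \<omega>))\<^sup>2) \<partial>M)"
  have rate: "limsup (\<lambda>n. log_rate n
      (measure M {\<omega> \<in> space M. ((\<lambda>z. Kmat G lam n z \<omega>), Cmat G n \<omega>) \<notin> CKL c d eps L}))
    \<le> ereal (A - \<alpha> * eps / 2 * L)" for L
    unfolding A_def using \<open>prob_space M\<close> meas indep ident \<alpha> int1 eps cd(2) gap
    by (rule limsup_log_rate_not_in_CKL_le)
  have slope: "\<alpha> * eps / 2 > 0" using \<alpha> eps by simp
  have "\<exists>S. unif_compact c d S \<and> limsup (\<lambda>n. log_rate n
      (measure M {\<omega> \<in> space M. ((\<lambda>z. Kmat G lam n z \<omega>), Cmat G n \<omega>) \<notin> S})) \<le> ereal (- B)"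
    for B :: real
  proof (intro exI conjI)
    define L where "L = max 0 ((A + B) / (\<alpha> * eps / 2))"
    show "unif_compact c d (CKL c d eps L :: ((real \<Rightarrow> complex^'r^'r) \<times> (complex^'r^'r)) set)"
      using eps cd by (intro CKL_compact) (auto simp: L_def)
    have "(A + B) / (\<alpha> * eps / 2) \<le> L" by (simp add: L_def)
    then have "A - \<alpha> * eps / 2 * L \<le> - B"
      using slope by (simp add: pos_divide_le_eq mult.commute)
    then show "limsup (\<lambda>n. log_rate n
      (measure M {\<omega> \<in> space M. ((\<lambda>z. Kmat G lam n z \<omega>), Cmat G n \<omega>) \<notin> CKL c d eps L})) \<le> ereal (- B)"
      using rate[of L] by (simp add: order_trans)
  qed
  then show ?thesis
    using Limsup_at_top_linear_decay[OF rate slope] by blast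
qed

end
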